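(* Let $\Sigma$ be a finite alphabet, let $T = T_1\cdots T_n$ (the text) and $P = P_1\cdots P_m$ (the pattern) be strings over $\Sigma$, and let $P^G$ be the $\mathcal P$-graph of $P$ (defined in the context). Then for every $i \in [1..n]$, $P$ swap matches $T$ at location $i$ if and only if $P^G$ matches $T$ at position $i$.
   Context: A swap permutation for a string $X = X_1\cdots X_m$ is a permutation $\pi$ of $\{1,\ldots,m\}$ such that (1) if $\pi(i)=j$ then $\pi(j)=i$; (2) $\pi(i)\in\{i-1,i,i+1\}$ for all $i$; (3) if $\pi(i)\neq i$ then $X_{\pi(i)}\neq X_i$. The swapped version is $\pi(X) = X_{\pi(1)}X_{\pi(2)}\cdots X_{\pi(m)}$. $P$ swap matches $T$ at location $i$ (identified by the end position of the match) if there is a swapped version $P'$ of $P$ with $P'_j = T_{i-m+j}$ for all $j\in[1..m]$ (in particular this requires $i\ge m$, so that all these text positions exist). The $\mathcal P$-graph $P^G=(V^P,E^P)$ of $P$ is the directed graph whose vertices are entries of a $3\times m$ array $M$ with rows indexed $-1,0,+1$: the vertices are $M[-1,i]$ for $2\le i\le m$ with label $P_{i-1}$; $M[0,i]$ for $1\le i\le m$ with label $P_i$; and $M[+1,i]$ for $1\le i\le m-1$ with label $P_{i+1}$. The edges are: $(M[-1,i],M[0,i+1])$ for $2\le i\le m-1$; $(M[-1,i],M[+1,i+1])$ for $2\le i\le m-2$; $(M[0,i],M[0,i+1])$ for $1\le i\le m-1$; $(M[0,i],M[+1,i+1])$ for $1\le i\le m-2$; and $(M[+1,i],M[-1,i+1])$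 for $1\le i\le m-1$. $P^G$ matches $T$ at position $i\in[1..n]$ if there is a directed path $u_1u_2\cdots u_m$ in $P^G$ (consecutive vertices joined by edges) with $u_1\in\{M[0,1],M[+1,1]\}$, $u_m\in\{M[-1,m],M[0,m]\}$, and $\mathrm{label}(u_j)=T_{i-m+j}$ for all $j\in[1..m]$ (again requiring all these text positions to exist). *)

theory Defs
  imports Main
begin

text \<open>Strings are 1-indexed: a string X of length m is a function X :: nat => 'a,
  whose letters are X 1, ..., X m (values outside [1..m] are irrelevant).\<close>

definition swap_perm :: "(nat \<Rightarrow> 'a) \<Rightarrow> nat \<Rightarrow> (nat \<Rightarrow> nat) \<Rightarrow> bool" where
  "swap_perm X m \<pi> \<longleftrightarrow>
     bij_betw \<pi> {1..m} {1..m} \<and>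
     (\<forall>i\<in>{1..m}. \<pi> (\<pi> i) = i) \<and>
     (\<forall>i\<in>{1..m}. \<pi> i = i - 1 \<and> i \<ge> 1 \<or> \<pi> i = i \<or> \<pi> i = i + 1) \<and>
     (\<forall>i\<in>{1..m}. \<pi> i \<noteq> i \<longrightarrow> X (\<pi> i) \<noteq> X i)"

definition swap_match :: "(nat \<Rightarrow> 'a) \<Rightarrow> nat \<Rightarrow> (nat \<Rightarrow> 'a) \<Rightarrow> nat \<Rightarrow> nat \<Rightarrow> bool" where
  "swap_match P m T n i \<longleftrightarrow>
     m \<le> i \<and> i \<le> n \<and>
     (\<exists>\<pi>. swap_perm P m \<pi> \<and> (\<forall>j\<in>{1..m}. P (\<pi> j) = T (i - m + j)))"

text \<open>P-graph: vertex M[r,i] is the pair (r,i) with r \<in> {-1,0,1}.\<close>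
definition PG_vertices :: "nat \<Rightarrow> (int \<times> nat) set" where
  "PG_vertices m =
     {(-1, i) | i. 2 \<le> i \<and> i \<le> m} \<union>
     {(0, i) | i. 1 \<le> i \<and> i \<le> m} \<union>
     {(1, i) | i. 1 \<le> i \<and> i + 1 \<le> m}"

definition PG_label :: "(nat \<Rightarrow> 'a) \<Rightarrow> int \<times> nat \<Rightarrow> 'a" where
  "PG_label P v = P (nat (int (snd v) + fst v))"

definition PG_edges :: "nat \<Rightarrow> ((int \<times> nat) \<times> (int \<times> nat)) set" where
  "PG_edges m =
     {((-1, i), (0, i + 1)) | i. 2 \<le> i \<and> i + 1 \<le> m} \<union>
     {((-1, i), (1, i + 1)) | i. 2 \<le> i \<and> i + 2 \<le> m} \<union>
     {((0, i), (0, i + 1)) | i. 1 \<le> i \<and> i + 1 \<le> m} \<union>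
     {((0, i), (1, i + 1)) | i. 1 \<le> i \<and> i + 2 \<le> m} \<union>
     {((1, i), (-1, i + 1)) | i. 1 \<le> i \<and> i + 1 \<le> m}"

definition PG_match :: "(nat \<Rightarrow> 'a) \<Rightarrow> nat \<Rightarrow> (nat \<Rightarrow> 'a) \<Rightarrow> nat \<Rightarrow> nat \<Rightarrow> bool" where
  "PG_match P m T n i \<longleftrightarrow>
     m \<le> i \<and> i \<le> n \<and>
     (\<exists>u :: nat \<Rightarrow> int \<times> nat.
        (\<forall>j\<in>{1..m}. u j \<in> PG_vertices m) \<and>
        (\<forall>j. 1 \<le> j \<and> j < m \<longrightarrow> (u j, u (j + 1)) \<in> PG_edges m) \<and>
        u 1 \<in> {(0, 1), (1, 1)} \<and>
        u m \<in> {(-1, m), (0, m)} \<and>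
        (\<forall>j\<in>{1..m}. PG_label P (u j) = T (i - m + j)))"

end

theory Submission
  imports Defs
begin

text \<open>A swap permutation \<pi> is encoded as the path through the vertices M[\<pi> j - j, j], whose
  label at column j is P (\<pi> j). The edges of the P-graph allow any sequence of offsets in which
  an offset +1 is immediately followed by -1, which is exactly the involution condition on \<pi>.
  Conversely the offsets of a path define a swap permutation, except that a swap of two equal
  letters is forbidden; replacing it by the identity does not change any label.\<close>

definition PG_path :: "nat \<Rightarrow> (nat \<Rightarrow> int \<times> nat) \<Rightarrow> bool" where
  "PG_path m u \<longleftrightarrow>
     (\<forall>j\<in>{1..m}. u j \<in> PG_vertices m) \<and>
     (\<forall>j. 1 \<le> j \<and> j < m \<longrightarrow> (u j, u (j + 1)) \<in> PG_edges m) \<and>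
     u 1 \<in> {(0, 1), (1, 1)} \<and>
     u m \<in> {(-1, m), (0, m)}"

lemma PG_match_iff_PG_path:
  "PG_match P m T n i \<longleftrightarrow>
     m \<le> i \<and> i \<le> n \<and> (\<exists>u. PG_path m u \<and> (\<forall>j\<in>{1..m}. PG_label P (u j) = T (i - m + j)))"
  unfolding PG_match_def PG_path_def by blast

lemma PG_vertexD:
  "(r, j) \<in> PG_vertices m \<Longrightarrow>
     r = -1 \<and> 2 \<le> j \<and> j \<le> m \<or> r = 0 \<and> 1 \<le> j \<and> j \<le> m \<or> r = 1 \<and> 1 \<le> j \<and> j + 1 \<le> m"
  unfolding PG_vertices_def by auto

lemma PG_edgeD:
  "((r, j), (s, k)) \<in> PG_edges m \<Longrightarrow> k = j + 1 \<and> (r = 1 \<longleftrightarrow> s = -1)"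
  unfolding PG_edges_def by auto

lemma PG_label_offset [simp]: "PG_label P (int k - int j, j) = P k"
  by (simp add: PG_label_def)

lemma PG_path_column:
  assumes "PG_path m u" and "j \<in> {1..m}"
  shows "u j = (fst (u j), j)"
  using assms(2)
proof (induction j)
  case 0
  then show ?case by simp
next
  case (Suc j)
  show ?case
  proof (cases "j = 0")
    case True
    then show ?thesis using assms(1) by (auto simp: PG_path_def)
  next
    case False
    with Suc have "u j = (fst (u j), j)" and "(u j, u (j + 1)) \<in> PG_edges m"
      using assms(1) by (auto simp: PG_path_def)
    then show ?thesis
      by (metis PG_edgeD Suc_eq_plus1 prod.collapse)
  qed
qed

lemma PG_path_offset_cases:
  assumes "PG_path m u" and "j \<in> {1..m}"
  shows "fst (u j) = -1 \<and> 2 \<le> j \<or> fst (u j) = 0 \<or> fst (u j) = 1 \<and> j + 1 \<le> m"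
  using PG_vertexD[of "fst (u j)" j m] PG_path_column[OF assms] assms
  by (auto simp: PG_path_def)

lemma PG_path_offset_step:
  assumes "PG_path m u" and "1 \<le> j" and "j < m"
  shows "fst (u j) = 1 \<longleftrightarrow> fst (u (j + 1)) = -1"
proof -
  have "(u j, u (j + 1)) \<in> PG_edges m"
    using assms by (auto simp: PG_path_def)
  moreover have "u j = (fst (u j), j)" and "u (j + 1) = (fst (u (j + 1)), j + 1)"
    using PG_path_column[OF assms(1)] assms by auto
  ultimately show ?thesis
    by (metis PG_edgeD)
qed

lemma swap_perm_PG_path:
  assumes "1 \<le> m" and "swap_perm P m \<pi>"
  shows "PG_path m (\<lambda>j. (int (\<pi> j) - int j, j))"
proof -
  define u where "u j = (int (\<pi> j) - int j, j)" for j
  have into: "\<pi> j \<in> {1..m}" and invol: "\<pi> (\<pi> j) = j"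
    and near: "\<pi> j = j - 1 \<or> \<pi> j = j \<or> \<pi> j = j + 1" if "j \<in> {1..m}" for j
    using assms(2) that unfolding swap_perm_def bij_betw_def by auto
  have u_cases: "u j = (-1, j) \<and> 2 \<le> j \<and> \<pi> j = j - 1 \<or> u j = (0, j) \<and> \<pi> j = j
      \<or> u j = (1, j) \<and> j + 1 \<le> m \<and> \<pi> j = j + 1" if "j \<in> {1..m}" for j
    using near[OF that] into[OF that] that by (auto simp: u_def of_nat_diff)
  have "u j \<in> PG_vertices m" if "j \<in> {1..m}" for j
    using u_cases[OF that] that unfolding PG_vertices_def by auto
  moreover have "(u j, u (j + 1)) \<in> PG_edges m" if "1 \<le> j" "j < m" for j
  proof -
    have "\<pi> j = j + 1 \<longleftrightarrow> \<pi> (j + 1) = j"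
      using invol[of j] invol[of "j + 1"] that by auto
    with u_cases[of j] u_cases[of "j + 1"] that show ?thesis
      unfolding PG_edges_def by auto
  qed
  moreover have "u 1 \<in> {(0, 1), (1, 1)}" and "u m \<in> {(-1, m), (0, m)}"
    using u_cases[of 1] u_cases[of m] assms(1) by auto
  ultimately show ?thesis
    unfolding PG_path_def u_def by blast
qed

lemma PG_path_swap_perm:
  assumes "PG_path m u"
  shows "\<exists>\<pi>. swap_perm P m \<pi> \<and> (\<forall>j\<in>{1..m}. P (\<pi> j) = PG_label P (u j))"
proof -
  define r where "r j = fst (u j)" for j
  have r_cases: "r j = -1 \<and> 2 \<le> j \<or> r j = 0 \<or> r j = 1 \<and> j + 1 \<le> m" if "j \<in> {1..m}" for j
    using PG_path_offset_cases[OF assms that] by (simp add: r_def)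
  have r_step: "r j = 1 \<longleftrightarrow> r (j + 1) = -1" if "1 \<le> j" "j < m" for j
    using PG_path_offset_step[OF assms that] by (simp add: r_def)
  define \<pi> where "\<pi> j = (if r j = 1 \<and> P (j + 1) \<noteq> P j then j + 1
      else if r j = -1 \<and> P (j - 1) \<noteq> P j then j - 1 else j)" for j
  have into: "\<pi> j \<in> {1..m}" if "j \<in> {1..m}" for j
    using r_cases[OF that] that unfolding \<pi>_def by fastforce
  have invol: "\<pi> (\<pi> j) = j" if j: "j \<in> {1..m}" for j
  proof (cases "r j = 1 \<and> P (j + 1) \<noteq> P j")
    case True
    with r_cases[OF j] r_step[of j] j have "r (j + 1) = -1" by auto
    with True show ?thesis unfolding \<pi>_def by auto
  next
    case not_right: False
    show ?thesis
    proof (cases "r j = -1 \<and> P (j - 1) \<noteq> P j")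
      case True
      with r_cases[OF j] have "2 \<le> j" by auto
      with r_step[of "j - 1"] True j have "r (j - 1) = 1" by auto
      with True not_right \<open>2 \<le> j\<close> show ?thesis unfolding \<pi>_def by auto
    qed (use not_right in \<open>auto simp: \<pi>_def\<close>)
  qed
  have "swap_perm P m \<pi>"
    unfolding swap_perm_def
  proof (intro conjI ballI)
    show "bij_betw \<pi> {1..m} {1..m}"
      by (rule bij_betw_byWitness[where f' = \<pi>]) (use invol into in auto)
  next
    fix j
    assume "j \<in> {1..m}"
    then show "\<pi> (\<pi> j) = j" by (rule invol)
  qed (auto simp: \<pi>_def)
  moreover have "P (\<pi> j) = PG_label P (u j)" if j: "j \<in> {1..m}" for j
  proof -
    have "u j = (r j, j)"
      using PG_path_column[OF assms j] by (simp add: r_def)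
    then show ?thesis
      using r_cases[OF j] unfolding \<pi>_def PG_label_def by (auto simp: nat_add_distrib nat_diff_distrib)
  qed
  ultimately show ?thesis by blast
qed

theorem lemma1:
  fixes T P :: "nat \<Rightarrow> 'a::finite" and n m :: nat
  assumes "1 \<le> m"
  shows "\<forall>i\<in>{1..n}. swap_match P m T n i \<longleftrightarrow> PG_match P m T n i"
proof (intro ballI iffI)
  fix i
  assume "swap_match P m T n i"
  then obtain \<pi> where "m \<le> i" "i \<le> n" "swap_perm P m \<pi>"
    and "\<forall>j\<in>{1..m}. P (\<pi> j) = T (i - m + j)"
    unfolding swap_match_def by blast
  with swap_perm_PG_path[OF assms] show "PG_match P m T n i"
    unfolding PG_match_iff_PG_path by (intro conjI exI[of _ "\<lambda>j. (int (\<pi> j) - int j, j)"]) auto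
next
  fix i
  assume "PG_match P m T n i"
  then obtain u where "m \<le> i" "i \<le> n" "PG_path m u"
    and "\<forall>j\<in>{1..m}. PG_label P (u j) = T (i - m + j)"
    unfolding PG_match_iff_PG_path by blast
  with PG_path_swap_perm[of m u P] show "swap_match P m T n i"
    unfolding swap_match_def by fastforce
qed

end
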